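(* Let $(\Omega,\mathcal F)$ be a measurable space, $\mathcal X$ the set of bounded measurable functions, $w$ a capacity, and $\alpha\in(0,1]$. Then $\mathrm{ES}^w_\alpha=I_{w_\alpha}$ on $\mathcal X$, where $w_\alpha=\min(w/\alpha,1)$ (pointwise on $\mathcal F$). Moreover, $\mathrm{ES}^w_\alpha$ is a coherent risk measure if and only if $w_\alpha$ is submodular.
   Context: A capacity is an increasing function $w:\mathcal F\to\mathbb R$ with $w(\varnothing)=0$, $w(\Omega)=1$; it is submodular if $w(A\cup B)+w(A\cap B)\le w(A)+w(B)$ for all $A,B\in\mathcal F$. $I_w(X)=\int_{-\infty}^0(w(X\ge x)-1)\,\mathrm dx+\int_0^\infty w(X\ge x)\,\mathrm dx$. For $t\in(0,1)$, $\mathrm{VaR}^w_t(X)=\inf\{x\in\mathbb R:w(X\ge x)\le t\}$, and the Choquet Expected Shortfall is $\mathrm{ES}^w_\alpha(X)=\frac1\alpha\int_0^\alpha\mathrm{VaR}^w_t(X)\,\mathrm dt$. A mapping $\mathcal R:\mathcal X\to\mathbb R$ is a coherent risk measure if it is monotone ($X\le Y\Rightarrow\mathcal R(X)\le\mathcal R(Y)$), translation invariant ($\mathcal R(X+c)=\mathcal R(X)+c$), positively homogeneous ($\mathcal R(cX)=c\mathcal R(X)$ for $c>0$) and convex. *)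

theory Defs
  imports "HOL-Analysis.Analysis"
begin

definition bdd_meas :: "'a measure \<Rightarrow> ('a \<Rightarrow> real) set" where
  "bdd_meas M = {X. X \<in> borel_measurable M \<and> bounded (X ` space M)}"

definition capacity :: "'a measure \<Rightarrow> ('a set \<Rightarrow> real) \<Rightarrow> bool" where
  "capacity M w \<longleftrightarrow> w {} = 0 \<and> w (space M) = 1 \<and>
     (\<forall>A\<in>sets M. \<forall>B\<in>sets M. A \<subseteq> B \<longrightarrow> w A \<le> w B)"

definition submodular :: "'a measure \<Rightarrow> ('a set \<Rightarrow> real) \<Rightarrow> bool" where
  "submodular M w \<longleftrightarrow>
     (\<forall>A\<in>sets M. \<forall>B\<in>sets M. w (A \<union> B) + w (A \<inter> B) \<le> w A + w B)"

definition geq_set :: "'a measure \<Rightarrow> ('a \<Rightarrow> real) \<Rightarrow> real \<Rightarrow> 'a set" where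
  "geq_set M X x = {\<omega> \<in> space M. X \<omega> \<ge> x}"

definition choquet :: "'a measure \<Rightarrow> ('a set \<Rightarrow> real) \<Rightarrow> ('a \<Rightarrow> real) \<Rightarrow> real" where
  "choquet M w X =
     integral {..0} (\<lambda>x. w (geq_set M X x) - 1) + integral {0..} (\<lambda>x. w (geq_set M X x))"

definition VaR :: "'a measure \<Rightarrow> ('a set \<Rightarrow> real) \<Rightarrow> real \<Rightarrow> ('a \<Rightarrow> real) \<Rightarrow> real" where
  "VaR M w t X = Inf {x. w (geq_set M X x) \<le> t}"

definition ES :: "'a measure \<Rightarrow> ('a set \<Rightarrow> real) \<Rightarrow> real \<Rightarrow> ('a \<Rightarrow> real) \<Rightarrow> real" where
  "ES M w \<alpha> X = (1 / \<alpha>) * integral {0..\<alpha>} (\<lambda>t. VaR M w t X)"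

definition w_alpha :: "('a set \<Rightarrow> real) \<Rightarrow> real \<Rightarrow> 'a set \<Rightarrow> real" where
  "w_alpha w \<alpha> A = min (w A / \<alpha>) 1"

definition coherent :: "'a measure \<Rightarrow> (('a \<Rightarrow> real) \<Rightarrow> real) \<Rightarrow> bool" where
  "coherent M R \<longleftrightarrow>
     (\<forall>X\<in>bdd_meas M. \<forall>Y\<in>bdd_meas M. (\<forall>\<omega>\<in>space M. X \<omega> \<le> Y \<omega>) \<longrightarrow> R X \<le> R Y) \<and>
     (\<forall>X\<in>bdd_meas M. \<forall>c::real. R (\<lambda>\<omega>. X \<omega> + c) = R X + c) \<and>
     (\<forall>X\<in>bdd_meas M. \<forall>c::real. c > 0 \<longrightarrow> R (\<lambda>\<omega>. c * X \<omega>) = c * R X) \<and>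
     (\<forall>X\<in>bdd_meas M. \<forall>Y\<in>bdd_meas M. \<forall>l::real. 0 \<le> l \<and> l \<le> 1 \<longrightarrow>
        R (\<lambda>\<omega>. l * X \<omega> + (1 - l) * Y \<omega>) \<le> l * R X + (1 - l) * R Y)"

end

theory Submission
  imports Defs
begin

(*
  Fix a bounded X with values in [L, B) and put \<phi>(x) = w {X \<ge> x}, a decreasing function
  that equals 1 below L and 0 from B on. Then VaR_t(X) is the generalised inverse of \<phi>,
  and computing the area of {(t, x). t < \<phi> x} inside [0, \<alpha>] \<times> [L, B] by Fubini in both
  orders gives \<integral>_0^\<alpha> VaR_t(X) dt = \<alpha> L + \<integral>_L^B min(\<phi>, \<alpha>), i.e. \<alpha> times the Choquet
  integral of X with respect to w_\<alpha> = min(w/\<alpha>, 1).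

  A Choquet integral is always monotone, translation invariant and positively homogeneous,
  so coherence amounts to subadditivity. For a submodular capacity v, submodularity applied
  to the level sets gives I_v(Z + c 1_A) \<le> I_v(Z) + c v(A); approximating Y \<ge> 0 from
  below by a staircase \<Sum>_j \<delta> 1_{Y \<ge> j\<delta>} then yields I_v(X + Y) \<le> I_v(X) + I_v(Y).
  Conversely, I_v(1_A + 1_B) = v(A \<union> B) + v(A \<inter> B), so subadditivity of I_v on
  indicators is submodularity of v.
*)

section \<open>Integrals of real functions\<close>

lemma integrable_on_antimono_on:
  fixes f :: "real \<Rightarrow> real"
  assumes "antimono_on {a..b} f"
  shows "f integrable_on {a..b}"
proof -
  have "mono_on {a..b} (\<lambda>x. - f x)"
    using assms by (auto simp: monotone_on_def)
  from integrable_neg[OF integrable_on_mono_on[OF this]] show ?thesis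
    by simp
qed

lemma integrable_on_antimono:
  fixes f :: "real \<Rightarrow> real"
  assumes "antimono f"
  shows "f integrable_on {a..b}"
  using monotone_on_subset[OF assms subset_UNIV] by (rule integrable_on_antimono_on)

lemma borel_measurable_antimono:
  fixes f :: "real \<Rightarrow> real"
  assumes "antimono f"
  shows "f \<in> borel_measurable borel"
proof -
  have "mono (\<lambda>x. - f x)"
    using assms by (auto simp: antimono_def mono_def)
  from borel_measurable_uminus[OF borel_measurable_mono[OF this]] show ?thesis
    by simp
qed

lemma integral_combine_real:
  fixes f :: "real \<Rightarrow> real"
  assumes "a \<le> c" "c \<le> b" "f integrable_on {a..b}"
  shows "integral {a..b} f = integral {a..c} f + integral {c..b} f"
  using Henstock_Kurzweil_Integration.integral_combine[OF assms] by simp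

lemma integral_shift_diff:
  fixes f :: "real \<Rightarrow> real"
  assumes int: "\<And>a b. f integrable_on {a..b}"
    and const: "\<And>x. x \<le> L \<Longrightarrow> f x = a" and zero: "\<And>x. B \<le> x \<Longrightarrow> f x = 0"
    and "L \<le> B" "0 \<le> c"
  shows "integral {L..B+c} (\<lambda>x. f (x - c)) - integral {L..B+c} f = c * a"
proof -
  have "integral {L..B+c} (\<lambda>x. f (x - c)) = integral {L-c..B} f"
    using integral_shift_real_ivl[of "L-c" "-c" B f] by simp
  also have "\<dots> = integral {L-c..L} f + integral {L..B} f"
    by (rule integral_combine_real) (use assms in auto)
  also have "integral {L-c..L} f = c * a"
    using integral_cong[of "{L-c..L}" f "\<lambda>_. a"] const \<open>0 \<le> c\<close> by simp
  moreover have "integral {L..B+c} f = integral {L..B} f + integral {B..B+c} f"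
    by (rule integral_combine_real) (use assms in auto)
  moreover have "integral {B..B+c} f = 0"
    using integral_cong[of "{B..B+c}" f "\<lambda>_. 0"] zero by simp
  ultimately show ?thesis
    by simp
qed

lemma sum_le_integral_antimono:
  fixes \<phi> :: "real \<Rightarrow> real"
  assumes anti: "antimono \<phi>" and "0 < \<delta>"
  shows "(\<Sum>j=1..k. \<delta> * \<phi> (real j * \<delta>)) \<le> integral {0..real k * \<delta>} \<phi>"
proof (induction k)
  case 0
  then show ?case by simp
next
  case (Suc k)
  have step: "\<delta> * \<phi> (real (Suc k) * \<delta>) \<le> integral {real k * \<delta>..real (Suc k) * \<delta>} \<phi>"
  proof -
    have "integral {real k * \<delta>..real (Suc k) * \<delta>} (\<lambda>_. \<phi> (real (Suc k) * \<delta>))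
        \<le> integral {real k * \<delta>..real (Suc k) * \<delta>} \<phi>"
      by (rule integral_le[OF integrable_const_ivl integrable_on_antimono[OF anti]])
         (auto intro: antimonoD[OF anti])
    then show ?thesis
      using \<open>0 < \<delta>\<close> by (simp add: algebra_simps)
  qed
  have "integral {0..real (Suc k) * \<delta>} \<phi>
      = integral {0..real k * \<delta>} \<phi> + integral {real k * \<delta>..real (Suc k) * \<delta>} \<phi>"
    by (rule integral_combine_real) (use \<open>0 < \<delta>\<close> anti in \<open>auto intro: integrable_on_antimono\<close>)
  then show ?case
    using Suc step by simp
qed

lemma min_le_staircase_sum:
  fixes y \<delta> :: real
  assumes "0 < \<delta>"
  shows "min (y - \<delta>) (real k * \<delta>) \<le> (\<Sum>j=1..k. if real j * \<delta> \<le> y then \<delta> else 0)"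
proof (induction k)
  case 0
  then show ?case using assms by simp
next
  case (Suc k)
  show ?case
  proof (cases "real (Suc k) * \<delta> \<le> y")
    case True
    then show ?thesis using Suc by (simp add: algebra_simps min_def split: if_splits)
  next
    case False
    then have "y - \<delta> < real k * \<delta>"
      by (simp add: algebra_simps)
    then show ?thesis using Suc False by (simp add: min_def split: if_splits)
  qed
qed

lemma emeasure_lborel_between:
  fixes E :: "real set"
  assumes "E \<in> sets borel" "{a<..<b} \<subseteq> E" "E \<subseteq> {a..b}" "a \<le> b"
  shows "emeasure lborel E = ennreal (b - a)"
proof (rule antisym)
  show "emeasure lborel E \<le> ennreal (b - a)"
    using emeasure_mono[OF assms(3), of lborel] assms(4) by simp
  show "ennreal (b - a) \<le> emeasure lborel E"
    using emeasure_mono[OF assms(2), of lborel] assms(1,4) by simp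
qed

lemma integral_eq_by_sections:
  fixes P :: "real \<Rightarrow> real \<Rightarrow> bool" and g h :: "real \<Rightarrow> real"
  assumes P[measurable]: "Measurable.pred (borel \<Otimes>\<^sub>M borel) (\<lambda>(t, x). P t x)"
    and g: "g integrable_on {a..b}" "\<And>t. t \<in> {a..b} \<Longrightarrow> 0 \<le> g t"
      "\<And>t. t \<in> {a..b} \<Longrightarrow> emeasure lborel {x \<in> {c..d}. P t x} = ennreal (g t)"
    and h: "h integrable_on {c..d}" "\<And>x. x \<in> {c..d} \<Longrightarrow> 0 \<le> h x"
      "\<And>x. x \<in> {c..d} \<Longrightarrow> emeasure lborel {t \<in> {a..b}. P t x} = ennreal (h x)"
  shows "integral {a..b} g = integral {c..d} h"
proof -
  define E where "E = {(t, x). t \<in> {a..b} \<and> x \<in> {c..d} \<and> P t x}"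
  have "Measurable.pred (borel \<Otimes>\<^sub>M borel) (\<lambda>(t, x). t \<in> {a..b} \<and> x \<in> {c..d} \<and> P t x)"
    by measurable
  then have E: "E \<in> sets (lborel \<Otimes>\<^sub>M lborel)"
    by (simp add: E_def pred_def space_pair_measure case_prod_unfold
        sets_pair_measure_cong[OF sets_lborel sets_lborel])
  have "ennreal (integral {a..b} g) = (\<integral>\<^sup>+t. ennreal (g t) * indicator {a..b} t \<partial>lborel)"
    using nn_integral_has_integral_lebesgue'[OF g(2) integrable_integral[OF g(1)]] by simp
  also have "\<dots> = (\<integral>\<^sup>+t. emeasure lborel (Pair t -` E) \<partial>lborel)"
  proof (rule nn_integral_cong)
    fix t
    have "Pair t -` E = (if t \<in> {a..b} then {x \<in> {c..d}. P t x} else {})"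
      by (auto simp: E_def)
    then show "ennreal (g t) * indicator {a..b} t = emeasure lborel (Pair t -` E)"
      using g(3)[of t] by (cases "t \<in> {a..b}") auto
  qed
  also have "\<dots> = emeasure (lborel \<Otimes>\<^sub>M lborel) E"
    using E by (rule lborel.emeasure_pair_measure_alt[symmetric])
  also have "\<dots> = (\<integral>\<^sup>+x. emeasure lborel ((\<lambda>t. (t, x)) -` E) \<partial>lborel)"
    using E by (rule lborel_pair.emeasure_pair_measure_alt2)
  also have "\<dots> = (\<integral>\<^sup>+x. ennreal (h x) * indicator {c..d} x \<partial>lborel)"
  proof (rule nn_integral_cong)
    fix x
    have "(\<lambda>t. (t, x)) -` E = (if x \<in> {c..d} then {t \<in> {a..b}. P t x} else {})"
      by (auto simp: E_def)
    then show "emeasure lborel ((\<lambda>t. (t, x)) -` E) = ennreal (h x) * indicator {c..d} x"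
      using h(3)[of x] by (cases "x \<in> {c..d}") auto
  qed
  also have "\<dots> = ennreal (integral {c..d} h)"
    using nn_integral_has_integral_lebesgue'[OF h(2) integrable_integral[OF h(1)]] by simp
  finally show ?thesis
    using integral_nonneg[OF g(1,2)] integral_nonneg[OF h(1,2)] by simp
qed

section \<open>Generalised inverses of decreasing functions\<close>

definition gen_inverse :: "(real \<Rightarrow> real) \<Rightarrow> real \<Rightarrow> real" where
  "gen_inverse \<phi> t = Inf {x. \<phi> x \<le> t}"

locale level_profile =
  fixes \<phi> :: "real \<Rightarrow> real" and L B :: real
  assumes anti: "antimono \<phi>"
    and eq_one: "\<And>x. x \<le> L \<Longrightarrow> \<phi> x = 1"
    and eq_zero: "\<And>x. B \<le> x \<Longrightarrow> \<phi> x = 0"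
    and bounds_le: "L \<le> B"
begin

lemma integrable: "\<phi> integrable_on {a..b}"
  using anti by (rule integrable_on_antimono)

lemma nonneg: "0 \<le> \<phi> x"
  using antimonoD[OF anti, of x "max x B"] eq_zero[of "max x B"] by simp

lemma le_one: "\<phi> x \<le> 1"
  using antimonoD[OF anti, of "min x L" x] eq_one[of "min x L"] by simp

lemma tail_integrals_eq: "integral {..0} (\<lambda>x. \<phi> x - 1) + integral {0..} \<phi> = L + integral {L..B} \<phi>"
proof -
  define L' where "L' = min L 0"
  define B' where "B' = max B 0"
  have "integral {..0} (\<lambda>x. \<phi> x - 1) = integral {L'..0} (\<lambda>x. \<phi> x - 1)"
    by (rule integral_spike_set) (auto intro!: empty_imp_negligible simp: L'_def eq_one)
  also have "\<dots> = integral {L'..0} \<phi> + L'"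
    using integral_diff[OF integrable integrable_const_ivl[of "1::real" L' 0]] by (simp add: L'_def)
  finally have neg: "integral {..0} (\<lambda>x. \<phi> x - 1) = integral {L'..0} \<phi> + L'" .
  have pos: "integral {0..} \<phi> = integral {0..B'} \<phi>"
    by (rule integral_spike_set) (auto intro!: empty_imp_negligible simp: B'_def eq_zero)
  have "integral {L'..B'} \<phi> = integral {L'..0} \<phi> + integral {0..B'} \<phi>"
    by (rule integral_combine_real) (auto simp: L'_def B'_def integrable)
  moreover have "integral {L'..B'} \<phi> = integral {L'..L} \<phi> + integral {L..B'} \<phi>"
    by (rule integral_combine_real) (use bounds_le in \<open>auto simp: L'_def B'_def integrable\<close>)
  moreover have "integral {L..B'} \<phi> = integral {L..B} \<phi> + integral {B..B'} \<phi>"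
    by (rule integral_combine_real) (use bounds_le in \<open>auto simp: B'_def integrable\<close>)
  moreover have "integral {L'..L} \<phi> = L - L'"
    using integral_cong[of "{L'..L}" \<phi> "\<lambda>_. 1"] eq_one by (simp add: L'_def)
  moreover have "integral {B..B'} \<phi> = 0"
    using integral_cong[of "{B..B'}" \<phi> "\<lambda>_. 0"] eq_zero by simp
  ultimately show ?thesis
    using neg pos by linarith
qed

lemma sublevel_nonempty: "0 \<le> t \<Longrightarrow> B \<in> {x. \<phi> x \<le> t}"
  using eq_zero[of B] by simp

lemma sublevel_ge:
  assumes "t < 1" "\<phi> x \<le> t"
  shows "L \<le> x"
proof (rule ccontr)
  assume "\<not> L \<le> x"
  then have "\<phi> x = 1"
    by (simp add: eq_one)
  with assms show False by simp
qed

lemma sublevel_bdd_below: "t < 1 \<Longrightarrow> bdd_below {x. \<phi> x \<le> t}"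
  by (rule bdd_belowI[of _ L]) (auto intro: sublevel_ge)

lemma gen_inverse_bounds:
  assumes "0 \<le> t" "t < 1"
  shows "L \<le> gen_inverse \<phi> t" "gen_inverse \<phi> t \<le> B"
proof -
  show "gen_inverse \<phi> t \<le> B"
    unfolding gen_inverse_def
    using cInf_lower[OF sublevel_nonempty[OF assms(1)] sublevel_bdd_below[OF assms(2)]] .
  show "L \<le> gen_inverse \<phi> t"
    unfolding gen_inverse_def
  proof (rule cInf_greatest)
    show "{x. \<phi> x \<le> t} \<noteq> {}"
      using sublevel_nonempty[OF assms(1)] by blast
  qed (use sublevel_ge[OF assms(2)] in simp)
qed

lemma less_gen_inverse:
  assumes "t < 1" "x < gen_inverse \<phi> t"
  shows "t < \<phi> x"
proof (rule ccontr)
  assume "\<not> t < \<phi> x"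
  then have "gen_inverse \<phi> t \<le> x"
    unfolding gen_inverse_def
    using cInf_lower[OF _ sublevel_bdd_below[OF assms(1)], of x] by simp
  with assms show False by simp
qed

lemma gen_inverse_less:
  assumes "0 \<le> t" "t < 1" "gen_inverse \<phi> t < x"
  shows "\<phi> x \<le> t"
proof -
  have "{x. \<phi> x \<le> t} \<noteq> {}"
    using sublevel_nonempty[OF assms(1)] by blast
  from cInf_lessD[OF this assms(3)[unfolded gen_inverse_def]]
  obtain y where "\<phi> y \<le> t" "y < x"
    by blast
  then show ?thesis
    using antimonoD[OF anti, of y x] by simp
qed

lemma gen_inverse_antimono:
  assumes "0 \<le> s" "s \<le> t" "t < 1"
  shows "gen_inverse \<phi> t \<le> gen_inverse \<phi> s"
  unfolding gen_inverse_def
proof (rule cInf_superset_mono)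
  show "{x. \<phi> x \<le> s} \<noteq> {}"
    using sublevel_nonempty[OF assms(1)] by blast
  show "{x. \<phi> x \<le> s} \<subseteq> {x. \<phi> x \<le> t}"
    using assms(2) by auto
qed (rule sublevel_bdd_below[OF assms(3)])

lemma borel_measurable [measurable]: "\<phi> \<in> borel_measurable borel"
  using anti by (rule borel_measurable_antimono)

lemma emeasure_superlevel_set:
  assumes "0 \<le> t"
  shows "emeasure lborel {x \<in> {L..B}. t < \<phi> x} = ennreal (if t < 1 then gen_inverse \<phi> t - L else 0)"
proof (cases "t < 1")
  case True
  have "emeasure lborel {x \<in> {L..B}. t < \<phi> x} = ennreal (gen_inverse \<phi> t - L)"
  proof (rule emeasure_lborel_between)
    show "{x \<in> {L..B}. t < \<phi> x} \<in> sets borel"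
      by measurable
    show "{L<..<gen_inverse \<phi> t} \<subseteq> {x \<in> {L..B}. t < \<phi> x}"
      using gen_inverse_bounds[OF assms True] less_gen_inverse[OF True] by auto
    show "{x \<in> {L..B}. t < \<phi> x} \<subseteq> {L..gen_inverse \<phi> t}"
      using gen_inverse_less[OF assms True] by (force simp: not_le[symmetric])
    show "L \<le> gen_inverse \<phi> t"
      using gen_inverse_bounds[OF assms True] by simp
  qed
  with True show ?thesis
    by simp
next
  case False
  have "\<not> t < \<phi> x" for x
    using le_one[of x] False by simp
  then have "{x \<in> {L..B}. t < \<phi> x} = {}"
    by blast
  then have "emeasure lborel {x \<in> {L..B}. t < \<phi> x} = 0"
    by (simp only: emeasure_empty)
  with False show ?thesis
    by simp
qed

lemma emeasure_subgraph_section: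
  assumes "0 \<le> \<alpha>"
  shows "emeasure lborel {t \<in> {0..\<alpha>}. t < \<phi> x} = ennreal (min (\<phi> x) \<alpha>)"
proof -
  have "emeasure lborel {t \<in> {0..\<alpha>}. t < \<phi> x} = ennreal (min (\<phi> x) \<alpha> - 0)"
  proof (rule emeasure_lborel_between)
    show "{t \<in> {0..\<alpha>}. t < \<phi> x} \<in> sets borel"
      by measurable
  qed (use nonneg[of x] assms in auto)
  then show ?thesis
    by simp
qed

lemma integral_gen_inverse:
  assumes "0 < \<alpha>" "\<alpha> \<le> 1"
  shows "integral {0..\<alpha>} (gen_inverse \<phi>) = \<alpha> * L + integral {L..B} (\<lambda>x. min (\<phi> x) \<alpha>)"
proof -
  \<comment> \<open>\<open>gen_inverse \<phi> 1\<close> is the infimum of an unbounded set, hence junk: cut off at \<open>t = 1\<close>.\<close>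
  define g where "g t = (if t < 1 then gen_inverse \<phi> t - L else 0)" for t
  have g_nonneg: "0 \<le> g t" if "0 \<le> t" for t
    using gen_inverse_bounds[OF that] by (simp add: g_def)
  have "antimono_on {0..\<alpha>} g"
  proof (rule monotone_onI)
    fix s t assume "s \<in> {0..\<alpha>}" "t \<in> {0..\<alpha>}" "s \<le> t"
    then show "g t \<le> g s"
      using g_nonneg[of s] gen_inverse_antimono[of s t] by (auto simp: g_def)
  qed
  then have g_integrable: "g integrable_on {0..\<alpha>}"
    by (rule integrable_on_antimono_on)
  have "integral {0..\<alpha>} g = integral {L..B} (\<lambda>x. min (\<phi> x) \<alpha>)"
  proof (rule integral_eq_by_sections[where P = "\<lambda>t x. t < \<phi> x"])
    show "Measurable.pred (borel \<Otimes>\<^sub>M borel) (\<lambda>(t, x). t < \<phi> x)"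
      by measurable
    show "(\<lambda>x. min (\<phi> x) \<alpha>) integrable_on {L..B}"
      by (rule integrable_on_antimono) (simp add: antimono_def antimonoD[OF anti] min.coboundedI1)
  qed (use g_integrable g_nonneg nonneg assms emeasure_superlevel_set emeasure_subgraph_section
      in \<open>auto simp: g_def\<close>)
  moreover have "integral {0..\<alpha>} (gen_inverse \<phi>) = integral {0..\<alpha>} (\<lambda>t. g t + L)"
    by (rule integral_spike[of "{1}"]) (use assms in \<open>auto simp: g_def\<close>)
  moreover have "integral {0..\<alpha>} (\<lambda>t. g t + L) = integral {0..\<alpha>} g + \<alpha> * L"
    using integral_add[OF g_integrable integrable_const_ivl[of L 0 \<alpha>]] assms by simp
  ultimately show ?thesis
    by simp
qed

end

section \<open>Choquet integrals of bounded measurable functions\<close>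

lemma bdd_meas_iff:
  "X \<in> bdd_meas M \<longleftrightarrow> X \<in> borel_measurable M \<and> (\<exists>K. \<forall>\<omega>\<in>space M. \<bar>X \<omega>\<bar> \<le> K)"
  unfolding bdd_meas_def bounded_iff by auto

lemma bdd_meas_borel_measurable: "X \<in> bdd_meas M \<Longrightarrow> X \<in> borel_measurable M"
  by (simp add: bdd_meas_iff)

lemma bdd_meas_bounds:
  assumes "X \<in> bdd_meas M"
  obtains L B where "L \<le> B" "\<And>\<omega>. \<omega> \<in> space M \<Longrightarrow> L \<le> X \<omega> \<and> X \<omega> < B"
proof -
  obtain K where K: "\<forall>\<omega>\<in>space M. \<bar>X \<omega>\<bar> \<le> K"
    using assms by (auto simp: bdd_meas_iff)
  show ?thesis
  proof (rule that)
    show "\<And>\<omega>. \<omega> \<in> space M \<Longrightarrow> - \<bar>K\<bar> \<le> X \<omega> \<and> X \<omega> < \<bar>K\<bar> + 1"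
      using K by fastforce
  qed simp
qed

lemma bdd_meas_const: "(\<lambda>\<omega>. c) \<in> bdd_meas M"
  by (auto simp: bdd_meas_iff)

lemma bdd_meas_indicator: "A \<in> sets M \<Longrightarrow> (indicator A :: 'a \<Rightarrow> real) \<in> bdd_meas M"
  by (auto simp: bdd_meas_iff indicator_def intro!: exI[of _ 1])

lemma bdd_meas_add:
  assumes "X \<in> bdd_meas M" "Y \<in> bdd_meas M"
  shows "(\<lambda>\<omega>. X \<omega> + Y \<omega>) \<in> bdd_meas M"
proof -
  obtain K1 K2 where "\<forall>\<omega>\<in>space M. \<bar>X \<omega>\<bar> \<le> K1" "\<forall>\<omega>\<in>space M. \<bar>Y \<omega>\<bar> \<le> K2"
    using assms by (auto simp: bdd_meas_iff)
  then have "\<forall>\<omega>\<in>space M. \<bar>X \<omega> + Y \<omega>\<bar> \<le> K1 + K2"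
    by (auto intro: abs_triangle_ineq[THEN order.trans] add_mono)
  with assms show ?thesis
    by (auto simp: bdd_meas_iff)
qed

lemma bdd_meas_cmult:
  assumes "X \<in> bdd_meas M"
  shows "(\<lambda>\<omega>. c * X \<omega>) \<in> bdd_meas M"
proof -
  obtain K where "\<forall>\<omega>\<in>space M. \<bar>X \<omega>\<bar> \<le> K"
    using assms by (auto simp: bdd_meas_iff)
  then have "\<forall>\<omega>\<in>space M. \<bar>c * X \<omega>\<bar> \<le> \<bar>c\<bar> * K"
    by (simp add: abs_mult mult_left_mono)
  with assms show ?thesis
    by (auto simp: bdd_meas_iff)
qed

lemma bdd_meas_sum:
  assumes "\<And>i. i \<in> I \<Longrightarrow> X i \<in> bdd_meas M"
  shows "(\<lambda>\<omega>. \<Sum>i\<in>I. X i \<omega>) \<in> bdd_meas M"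
  using assms
proof (induction I rule: infinite_finite_induct)
  case (insert i I)
  then show ?case
    using bdd_meas_add[of "X i" M "\<lambda>\<omega>. \<Sum>i\<in>I. X i \<omega>"] by simp
qed (simp_all add: bdd_meas_const)

lemma capacity_mono:
  "capacity M v \<Longrightarrow> A \<in> sets M \<Longrightarrow> B \<in> sets M \<Longrightarrow> A \<subseteq> B \<Longrightarrow> v A \<le> v B"
  unfolding capacity_def by blast

lemma sets_geq_set: "X \<in> borel_measurable M \<Longrightarrow> geq_set M X x \<in> sets M"
  unfolding geq_set_def by measurable

lemma geq_set_outside_range:
  assumes "\<And>\<omega>. \<omega> \<in> space M \<Longrightarrow> L \<le> X \<omega> \<and> X \<omega> < B"
  shows "x \<le> L \<Longrightarrow> geq_set M X x = space M" and "B \<le> x \<Longrightarrow> geq_set M X x = {}"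
  using assms by (force simp: geq_set_def)+

lemma antimono_capacity_Int_geq_set:
  assumes "capacity M v" "X \<in> borel_measurable M" "A \<in> sets M"
  shows "antimono (\<lambda>x. v (A \<inter> geq_set M X x))"
proof (rule antimonoI)
  show "v (A \<inter> geq_set M X y) \<le> v (A \<inter> geq_set M X x)" if "x \<le> y" for x y
    by (rule capacity_mono[OF assms(1)])
       (use assms(3) sets_geq_set[OF assms(2)] that in \<open>auto simp: geq_set_def\<close>)
qed

lemma antimono_capacity_geq_set:
  assumes "capacity M v" "X \<in> borel_measurable M"
  shows "antimono (\<lambda>x. v (geq_set M X x))"
proof -
  have "space M \<inter> geq_set M X x = geq_set M X x" for x
    by (auto simp: geq_set_def)
  then show ?thesis
    using antimono_capacity_Int_geq_set[OF assms sets.top] by simp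
qed

lemma integrable_capacity_geq_set:
  "capacity M v \<Longrightarrow> X \<in> borel_measurable M \<Longrightarrow> (\<lambda>x. v (geq_set M X x)) integrable_on {a..b}"
  using integrable_on_antimono antimono_capacity_geq_set by blast

lemma level_profile_capacity:
  assumes cap: "capacity M v" and X: "X \<in> borel_measurable M"
    and bounds: "\<And>\<omega>. \<omega> \<in> space M \<Longrightarrow> L \<le> X \<omega> \<and> X \<omega> < B" and "L \<le> B"
  shows "level_profile (\<lambda>x. v (geq_set M X x)) L B"
proof
  show "antimono (\<lambda>x. v (geq_set M X x))"
    using cap X by (rule antimono_capacity_geq_set)
  show "v (geq_set M X x) = 1" if "x \<le> L" for x
    using cap geq_set_outside_range(1)[where M = M and X = X, OF bounds that]
    by (simp add: capacity_def)
  show "v (geq_set M X x) = 0" if "B \<le> x" for x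
    using cap geq_set_outside_range(2)[where M = M and X = X, OF bounds that]
    by (simp add: capacity_def)
qed fact

lemma choquet_eq_interval:
  assumes "capacity M v" "X \<in> borel_measurable M"
    and "\<And>\<omega>. \<omega> \<in> space M \<Longrightarrow> L \<le> X \<omega> \<and> X \<omega> < B" and "L \<le> B"
  shows "choquet M v X = L + integral {L..B} (\<lambda>x. v (geq_set M X x))"
  unfolding choquet_def by (rule level_profile.tail_integrals_eq[OF level_profile_capacity[OF assms]])

lemma w_alpha_eq: "0 < \<alpha> \<Longrightarrow> w_alpha w \<alpha> A = min (w A) \<alpha> / \<alpha>"
  by (cases "w A \<le> \<alpha>") (simp_all add: w_alpha_def min_def field_simps)

lemma capacity_w_alpha:
  assumes "capacity M w" "0 < \<alpha>" "\<alpha> \<le> 1"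
  shows "capacity M (w_alpha w \<alpha>)"
proof -
  have "min (w A) \<alpha> / \<alpha> \<le> min (w B) \<alpha> / \<alpha>" if "A \<in> sets M" "B \<in> sets M" "A \<subseteq> B" for A B
    using capacity_mono[OF assms(1) that] assms(2) by (simp add: divide_right_mono min.coboundedI1)
  then show ?thesis
    using assms by (auto simp: capacity_def w_alpha_eq min_def)
qed

lemma VaR_eq_gen_inverse: "VaR M w t X = gen_inverse (\<lambda>x. w (geq_set M X x)) t"
  by (simp add: VaR_def gen_inverse_def)

lemma ES_eq_choquet_w_alpha:
  assumes cap: "capacity M w" and \<alpha>: "0 < \<alpha>" "\<alpha> \<le> 1" and X: "X \<in> bdd_meas M"
  shows "ES M w \<alpha> X = choquet M (w_alpha w \<alpha>) X"
proof -
  obtain L B where "L \<le> B" and bounds: "\<And>\<omega>. \<omega> \<in> space M \<Longrightarrow> L \<le> X \<omega> \<and> X \<omega> < B"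
    using bdd_meas_bounds[OF X] by blast
  have Xm: "X \<in> borel_measurable M"
    using X by (rule bdd_meas_borel_measurable)
  interpret level_profile "\<lambda>x. w (geq_set M X x)" L B
    using cap Xm bounds \<open>L \<le> B\<close> by (rule level_profile_capacity)
  have "ES M w \<alpha> X = integral {0..\<alpha>} (gen_inverse (\<lambda>x. w (geq_set M X x))) / \<alpha>"
    by (simp add: ES_def VaR_eq_gen_inverse)
  also have "\<dots> = L + integral {L..B} (\<lambda>x. min (w (geq_set M X x)) \<alpha>) / \<alpha>"
    using integral_gen_inverse[OF \<alpha>] \<alpha> by (simp add: field_simps)
  also have "\<dots> = L + integral {L..B} (\<lambda>x. w_alpha w \<alpha> (geq_set M X x))"
    using \<alpha> by (simp add: w_alpha_eq)
  also have "\<dots> = choquet M (w_alpha w \<alpha>) X"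
    using choquet_eq_interval[OF capacity_w_alpha[OF cap \<alpha>] Xm bounds \<open>L \<le> B\<close>] by simp
  finally show ?thesis .
qed

section \<open>Coherence of Choquet integrals\<close>

lemma choquet_mono:
  assumes cap: "capacity M v" and X: "X \<in> bdd_meas M" and Y: "Y \<in> bdd_meas M"
    and le: "\<And>\<omega>. \<omega> \<in> space M \<Longrightarrow> X \<omega> \<le> Y \<omega>"
  shows "choquet M v X \<le> choquet M v Y"
proof -
  obtain L B1 where "L \<le> B1" and X_bounds: "\<And>\<omega>. \<omega> \<in> space M \<Longrightarrow> L \<le> X \<omega> \<and> X \<omega> < B1"
    using bdd_meas_bounds[OF X] by blast
  obtain L2 B2 where "L2 \<le> B2" and Y_bounds: "\<And>\<omega>. \<omega> \<in> space M \<Longrightarrow> L2 \<le> Y \<omega> \<and> Y \<omega> < B2"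
    using bdd_meas_bounds[OF Y] by blast
  define B where "B = max B1 B2"
  have "L \<le> B"
    using \<open>L \<le> B1\<close> by (simp add: B_def)
  have Xm: "X \<in> borel_measurable M" and Ym: "Y \<in> borel_measurable M"
    using X Y by (simp_all add: bdd_meas_borel_measurable)
  have "integral {L..B} (\<lambda>x. v (geq_set M X x)) \<le> integral {L..B} (\<lambda>x. v (geq_set M Y x))"
  proof (rule integral_le)
    show "v (geq_set M X x) \<le> v (geq_set M Y x)" for x
      by (rule capacity_mono[OF cap sets_geq_set[OF Xm] sets_geq_set[OF Ym]])
         (use le in \<open>force simp: geq_set_def\<close>)
  qed (rule integrable_capacity_geq_set[OF cap Xm], rule integrable_capacity_geq_set[OF cap Ym])
  moreover have "choquet M v X = L + integral {L..B} (\<lambda>x. v (geq_set M X x))"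
  proof (rule choquet_eq_interval[OF cap Xm _ \<open>L \<le> B\<close>])
    show "L \<le> X \<omega> \<and> X \<omega> < B" if "\<omega> \<in> space M" for \<omega>
      using X_bounds[OF that] by (simp add: B_def less_max_iff_disj)
  qed
  moreover have "choquet M v Y = L + integral {L..B} (\<lambda>x. v (geq_set M Y x))"
  proof (rule choquet_eq_interval[OF cap Ym _ \<open>L \<le> B\<close>])
    show "L \<le> Y \<omega> \<and> Y \<omega> < B" if "\<omega> \<in> space M" for \<omega>
      using X_bounds[OF that] Y_bounds[OF that] le[OF that] by (simp add: B_def less_max_iff_disj)
  qed
  ultimately show ?thesis
    by simp
qed

lemma choquet_add_const:
  assumes cap: "capacity M v" and X: "X \<in> bdd_meas M"
  shows "choquet M v (\<lambda>\<omega>. X \<omega> + c) = choquet M v X + c"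
proof -
  obtain L B where "L \<le> B" and bounds: "\<And>\<omega>. \<omega> \<in> space M \<Longrightarrow> L \<le> X \<omega> \<and> X \<omega> < B"
    using bdd_meas_bounds[OF X] by blast
  have Xm: "X \<in> borel_measurable M"
    using X by (rule bdd_meas_borel_measurable)
  have "geq_set M (\<lambda>\<omega>. X \<omega> + c) x = geq_set M X (x + - c)" for x
    by (auto simp: geq_set_def)
  moreover have "choquet M v (\<lambda>\<omega>. X \<omega> + c)
      = (L + c) + integral {L+c..B+c} (\<lambda>x. v (geq_set M (\<lambda>\<omega>. X \<omega> + c) x))"
  proof (rule choquet_eq_interval[OF cap])
    show "(\<lambda>\<omega>. X \<omega> + c) \<in> borel_measurable M"
      using Xm by measurable
  qed (use bounds \<open>L \<le> B\<close> in auto)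
  ultimately have "choquet M v (\<lambda>\<omega>. X \<omega> + c)
      = (L + c) + integral {L+c..B+c} (\<lambda>x. v (geq_set M X (x + - c)))"
    by simp
  also have "integral {L+c..B+c} (\<lambda>x. v (geq_set M X (x + - c))) = integral {L..B} (\<lambda>x. v (geq_set M X x))"
    using integral_shift_real_ivl[of L "-c" B "\<lambda>x. v (geq_set M X x)"] by simp
  finally show ?thesis
    using choquet_eq_interval[OF cap Xm bounds \<open>L \<le> B\<close>] by simp
qed

lemma choquet_cmult:
  assumes cap: "capacity M v" and X: "X \<in> bdd_meas M" and "0 < c"
  shows "choquet M v (\<lambda>\<omega>. c * X \<omega>) = c * choquet M v X"
proof -
  obtain L B where "L \<le> B" and bounds: "\<And>\<omega>. \<omega> \<in> space M \<Longrightarrow> L \<le> X \<omega> \<and> X \<omega> < B"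
    using bdd_meas_bounds[OF X] by blast
  have Xm: "X \<in> borel_measurable M"
    using X by (rule bdd_meas_borel_measurable)
  define \<phi> where "\<phi> x = v (geq_set M X x)" for x
  have "geq_set M (\<lambda>\<omega>. c * X \<omega>) x = geq_set M X (x / c)" for x
    using \<open>0 < c\<close> by (auto simp: geq_set_def field_simps)
  moreover have "choquet M v (\<lambda>\<omega>. c * X \<omega>)
      = c * L + integral {c * L..c * B} (\<lambda>x. v (geq_set M (\<lambda>\<omega>. c * X \<omega>) x))"
  proof (rule choquet_eq_interval[OF cap])
    show "(\<lambda>\<omega>. c * X \<omega>) \<in> borel_measurable M"
      using Xm by measurable
  qed (use bounds \<open>L \<le> B\<close> \<open>0 < c\<close> in auto)
  ultimately have "choquet M v (\<lambda>\<omega>. c * X \<omega>) = c * L + integral {c * L..c * B} (\<lambda>x. \<phi> (x / c))"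
    by (simp add: \<phi>_def)
  also have "integral {c * L..c * B} (\<lambda>x. \<phi> (x / c)) = c * integral {L..B} \<phi>"
  proof -
    have "(\<lambda>x. x / (1 / c)) ` {L..B} = {c * L..c * B}"
      using image_mult_atLeastAtMost_if'[of c L B] \<open>L \<le> B\<close> \<open>0 < c\<close> by (simp add: mult.commute)
    then show ?thesis
      using integral_stretch_real[of "1 / c" L B \<phi>] \<open>0 < c\<close> by simp
  qed
  finally show ?thesis
    using choquet_eq_interval[OF cap Xm bounds \<open>L \<le> B\<close>] by (simp add: \<phi>_def[abs_def] algebra_simps)
qed

lemma submodular_geq_set_add_indicator:
  assumes sub: "submodular M v" and Z: "Z \<in> borel_measurable M" and A: "A \<in> sets M" and "0 < c"
  shows "v (geq_set M (\<lambda>\<omega>. Z \<omega> + c * indicator A \<omega>) x) + v (A \<inter> geq_set M Z x)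
    \<le> v (geq_set M Z x) + v (A \<inter> geq_set M Z (x - c))"
proof -
  let ?U = "geq_set M Z x" and ?V = "A \<inter> geq_set M Z (x - c)"
  have "?U \<in> sets M" "?V \<in> sets M"
    using sets_geq_set[OF Z] A by auto
  then have "v (?U \<union> ?V) + v (?U \<inter> ?V) \<le> v ?U + v ?V"
    using sub by (simp add: submodular_def)
  moreover have "geq_set M (\<lambda>\<omega>. Z \<omega> + c * indicator A \<omega>) x = ?U \<union> ?V"
    using \<open>0 < c\<close> sets.sets_into_space[OF A] by (auto simp: geq_set_def indicator_def)
  moreover have "?U \<inter> ?V = A \<inter> geq_set M Z x"
    using \<open>0 < c\<close> by (auto simp: geq_set_def)
  ultimately show ?thesis
    by simp
qed

lemma integral_shift_capacity_Int_geq_set: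
  assumes cap: "capacity M v" and Z: "Z \<in> borel_measurable M" and A: "A \<in> sets M"
    and bounds: "\<And>\<omega>. \<omega> \<in> space M \<Longrightarrow> L \<le> Z \<omega> \<and> Z \<omega> < B" and "L \<le> B" "0 \<le> c"
  shows "integral {L..B+c} (\<lambda>x. v (A \<inter> geq_set M Z (x - c)))
    - integral {L..B+c} (\<lambda>x. v (A \<inter> geq_set M Z x)) = c * v A"
proof (rule integral_shift_diff[OF _ _ _ \<open>L \<le> B\<close> \<open>0 \<le> c\<close>])
  show "(\<lambda>x. v (A \<inter> geq_set M Z x)) integrable_on {a..b}" for a b
    using antimono_capacity_Int_geq_set[OF cap Z A] by (rule integrable_on_antimono)
  show "v (A \<inter> geq_set M Z x) = v A" if "x \<le> L" for x
    using geq_set_outside_range(1)[where M = M and X = Z, OF bounds that] sets.sets_into_space[OF A]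
    by (simp add: Int_absorb2)
  show "v (A \<inter> geq_set M Z x) = 0" if "B \<le> x" for x
    using geq_set_outside_range(2)[where M = M and X = Z, OF bounds that] cap by (simp add: capacity_def)
qed

lemma choquet_add_indicator_le:
  assumes cap: "capacity M v" and sub: "submodular M v" and Z: "Z \<in> bdd_meas M"
    and A: "A \<in> sets M" and "0 < c"
  shows "choquet M v (\<lambda>\<omega>. Z \<omega> + c * indicator A \<omega>) \<le> choquet M v Z + c * v A"
proof -
  obtain L B where "L \<le> B" and bounds: "\<And>\<omega>. \<omega> \<in> space M \<Longrightarrow> L \<le> Z \<omega> \<and> Z \<omega> < B"
    using bdd_meas_bounds[OF Z] by blast
  let ?Z' = "\<lambda>\<omega>. Z \<omega> + c * indicator A \<omega>"
  have Zm: "Z \<in> borel_measurable M" and Z'm: "?Z' \<in> borel_measurable M"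
    using bdd_meas_borel_measurable[OF Z] A by measurable
  define f where "f x = v (A \<inter> geq_set M Z x)" for x
  have "antimono f"
    unfolding f_def using cap Zm A by (rule antimono_capacity_Int_geq_set)
  then have f_int: "f integrable_on {a..b}" "(\<lambda>x. f (x - c)) integrable_on {a..b}" for a b
    by (auto intro!: integrable_on_antimono simp: antimono_def)
  have Z_int: "(\<lambda>x. v (geq_set M Z x)) integrable_on {a..b}" for a b
    using cap Zm by (rule integrable_capacity_geq_set)
  have "choquet M v ?Z' = L + integral {L..B+c} (\<lambda>x. v (geq_set M ?Z' x))"
  proof (rule choquet_eq_interval[OF cap Z'm])
    show "L \<le> ?Z' \<omega> \<and> ?Z' \<omega> < B + c" if "\<omega> \<in> space M" for \<omega>
      using bounds[OF that] \<open>0 < c\<close> by (simp add: indicator_def)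
  qed (use \<open>L \<le> B\<close> \<open>0 < c\<close> in simp)
  also have "\<dots> \<le> L + integral {L..B+c} (\<lambda>x. v (geq_set M Z x) + f (x - c) - f x)"
  proof (rule add_left_mono, rule integral_le)
    show "(\<lambda>x. v (geq_set M Z x) + f (x - c) - f x) integrable_on {L..B+c}"
      by (intro integrable_diff integrable_add Z_int f_int)
    show "v (geq_set M ?Z' x) \<le> v (geq_set M Z x) + f (x - c) - f x" for x
      using submodular_geq_set_add_indicator[OF sub Zm A \<open>0 < c\<close>, of x] by (simp add: f_def)
  qed (rule integrable_capacity_geq_set[OF cap Z'm])
  also have "\<dots> = L + integral {L..B+c} (\<lambda>x. v (geq_set M Z x))
      + (integral {L..B+c} (\<lambda>x. f (x - c)) - integral {L..B+c} f)"
    by (simp add: integral_diff integral_add integrable_add Z_int f_int)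
  also have "integral {L..B+c} (\<lambda>x. f (x - c)) - integral {L..B+c} f = c * v A"
    unfolding f_def using cap Zm A bounds \<open>L \<le> B\<close> \<open>0 < c\<close>
    by (intro integral_shift_capacity_Int_geq_set) simp_all
  also have "L + integral {L..B+c} (\<lambda>x. v (geq_set M Z x)) = choquet M v Z"
  proof (rule choquet_eq_interval[OF cap Zm, symmetric])
    show "L \<le> Z \<omega> \<and> Z \<omega> < B + c" if "\<omega> \<in> space M" for \<omega>
      using bounds[OF that] \<open>0 < c\<close> by simp
  qed (use \<open>L \<le> B\<close> \<open>0 < c\<close> in simp)
  finally show ?thesis .
qed

lemma choquet_add_sum_indicator_le:
  fixes A :: "nat \<Rightarrow> 'a set"
  assumes cap: "capacity M v" and sub: "submodular M v" and X: "X \<in> bdd_meas M"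
    and A: "\<And>j. A j \<in> sets M" and "0 < c"
  shows "choquet M v (\<lambda>\<omega>. X \<omega> + (\<Sum>j=1..k. c * indicator (A j) \<omega>))
    \<le> choquet M v X + (\<Sum>j=1..k. c * v (A j))"
proof (induction k)
  case 0
  then show ?case by simp
next
  case (Suc k)
  let ?S = "\<lambda>\<omega>. X \<omega> + (\<Sum>j=1..k. c * indicator (A j) \<omega>)"
  have "?S \<in> bdd_meas M"
    by (intro bdd_meas_add X bdd_meas_sum bdd_meas_cmult bdd_meas_indicator A)
  then have "choquet M v (\<lambda>\<omega>. ?S \<omega> + c * indicator (A (Suc k)) \<omega>)
      \<le> choquet M v ?S + c * v (A (Suc k))"
    using choquet_add_indicator_le[OF cap sub _ A \<open>0 < c\<close>] by blast
  then show ?case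
    using Suc by (simp add: add.assoc)
qed

lemma sum_capacity_geq_set_le_choquet:
  assumes cap: "capacity M v" and X: "X \<in> borel_measurable M" and "0 < \<delta>"
    and bounds: "\<And>\<omega>. \<omega> \<in> space M \<Longrightarrow> 0 \<le> X \<omega> \<and> X \<omega> < real N * \<delta>"
  shows "(\<Sum>j=1..N. \<delta> * v (geq_set M X (real j * \<delta>))) \<le> choquet M v X"
proof -
  have "0 \<le> real N * \<delta>"
    using \<open>0 < \<delta>\<close> by simp
  with cap X bounds have "choquet M v X = 0 + integral {0..real N * \<delta>} (\<lambda>x. v (geq_set M X x))"
    by (rule choquet_eq_interval)
  then show ?thesis
    using sum_le_integral_antimono[OF antimono_capacity_geq_set[OF cap X] \<open>0 < \<delta>\<close>, of N] by simp
qed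

lemma choquet_subadditive_nonneg:
  assumes cap: "capacity M v" and sub: "submodular M v" and X: "X \<in> bdd_meas M"
    and Y: "Y \<in> bdd_meas M" and Y_nonneg: "\<And>\<omega>. \<omega> \<in> space M \<Longrightarrow> 0 \<le> Y \<omega>"
  shows "choquet M v (\<lambda>\<omega>. X \<omega> + Y \<omega>) \<le> choquet M v X + choquet M v Y"
proof (rule field_le_epsilon)
  fix \<delta> :: real
  assume "0 < \<delta>"
  obtain L B where bounds: "\<And>\<omega>. \<omega> \<in> space M \<Longrightarrow> L \<le> Y \<omega> \<and> Y \<omega> < B"
    using bdd_meas_bounds[OF Y] by blast
  obtain N :: nat where "B < real N * \<delta>"
    using ex_less_of_nat_mult[OF \<open>0 < \<delta>\<close>] by blast
  have Ym: "Y \<in> borel_measurable M"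
    using Y by (rule bdd_meas_borel_measurable)
  define A where "A j = geq_set M Y (real j * \<delta>)" for j :: nat
  have A_sets: "A j \<in> sets M" for j
    unfolding A_def using Ym by (rule sets_geq_set)
  define S where "S \<omega> = (\<Sum>j=1..N. \<delta> * indicator (A j) \<omega>)" for \<omega>
  have XS: "(\<lambda>\<omega>. X \<omega> + S \<omega>) \<in> bdd_meas M"
    unfolding S_def by (intro bdd_meas_add X bdd_meas_sum bdd_meas_cmult bdd_meas_indicator A_sets)
  have Y_le: "Y \<omega> \<le> S \<omega> + \<delta>" if "\<omega> \<in> space M" for \<omega>
  proof -
    have "S \<omega> = (\<Sum>j=1..N. if real j * \<delta> \<le> Y \<omega> then \<delta> else 0)"
      unfolding S_def A_def by (rule sum.cong) (use that in \<open>auto simp: geq_set_def\<close>)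
    moreover have "min (Y \<omega> - \<delta>) (real N * \<delta>) = Y \<omega> - \<delta>"
      using bounds[OF that] \<open>B < real N * \<delta>\<close> \<open>0 < \<delta>\<close> by simp
    ultimately show ?thesis
      using min_le_staircase_sum[OF \<open>0 < \<delta>\<close>, of "Y \<omega>" N] by simp
  qed
  have "(\<Sum>j=1..N. \<delta> * v (A j)) \<le> choquet M v Y"
    unfolding A_def
    by (rule sum_capacity_geq_set_le_choquet[OF cap Ym \<open>0 < \<delta>\<close>])
       (use bounds Y_nonneg \<open>B < real N * \<delta>\<close> in \<open>fastforce intro: less_le_trans\<close>)
  have "choquet M v (\<lambda>\<omega>. X \<omega> + Y \<omega>) \<le> choquet M v (\<lambda>\<omega>. (X \<omega> + S \<omega>) + \<delta>)"
    by (rule choquet_mono[OF cap bdd_meas_add[OF X Y] bdd_meas_add[OF XS bdd_meas_const]])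
       (use Y_le in force)
  also have "\<dots> = choquet M v (\<lambda>\<omega>. X \<omega> + S \<omega>) + \<delta>"
    using cap XS by (rule choquet_add_const)
  also have "\<dots> \<le> choquet M v X + (\<Sum>j=1..N. \<delta> * v (A j)) + \<delta>"
    using choquet_add_sum_indicator_le[OF cap sub X A_sets \<open>0 < \<delta>\<close>, where k = N] by (simp add: S_def)
  finally show "choquet M v (\<lambda>\<omega>. X \<omega> + Y \<omega>) \<le> choquet M v X + choquet M v Y + \<delta>"
    using \<open>(\<Sum>j=1..N. \<delta> * v (A j)) \<le> choquet M v Y\<close> by simp
qed

lemma choquet_subadditive:
  assumes cap: "capacity M v" and sub: "submodular M v" and X: "X \<in> bdd_meas M" and Y: "Y \<in> bdd_meas M"
  shows "choquet M v (\<lambda>\<omega>. X \<omega> + Y \<omega>) \<le> choquet M v X + choquet M v Y"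
proof -
  obtain L B where bounds: "\<And>\<omega>. \<omega> \<in> space M \<Longrightarrow> L \<le> Y \<omega> \<and> Y \<omega> < B"
    using bdd_meas_bounds[OF Y] by blast
  define Y' where "Y' \<omega> = Y \<omega> + - L" for \<omega>
  have Y': "Y' \<in> bdd_meas M"
    unfolding Y'_def by (rule bdd_meas_add[OF Y bdd_meas_const])
  have "(\<lambda>\<omega>. X \<omega> + Y \<omega>) = (\<lambda>\<omega>. (X \<omega> + Y' \<omega>) + L)"
    by (simp add: Y'_def)
  then have "choquet M v (\<lambda>\<omega>. X \<omega> + Y \<omega>) = choquet M v (\<lambda>\<omega>. X \<omega> + Y' \<omega>) + L"
    using choquet_add_const[OF cap bdd_meas_add[OF X Y']] by simp
  also have "\<dots> \<le> choquet M v X + choquet M v Y' + L"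
    using choquet_subadditive_nonneg[OF cap sub X Y'] bounds by (simp add: Y'_def)
  also have "choquet M v Y' = choquet M v Y + - L"
    unfolding Y'_def using cap Y by (rule choquet_add_const)
  finally show ?thesis
    by simp
qed

lemma choquet_indicator_add:
  assumes cap: "capacity M v" and A: "A \<in> sets M" and B: "B \<in> sets M"
  shows "choquet M v (\<lambda>\<omega>. indicator A \<omega> + indicator B \<omega>) = v (A \<union> B) + v (A \<inter> B)"
proof -
  let ?Z = "\<lambda>\<omega>. indicator A \<omega> + indicator B \<omega> :: real"
  define \<phi> where "\<phi> x = v (geq_set M ?Z x)" for x
  have Zm: "?Z \<in> borel_measurable M"
    using A B by measurable
  have \<phi>_int: "\<phi> integrable_on {a..b}" for a b
    unfolding \<phi>_def using cap Zm by (rule integrable_capacity_geq_set)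
  have "A \<subseteq> space M" "B \<subseteq> space M"
    using A B by (simp_all add: sets.sets_into_space)
  then have level_sets: "geq_set M ?Z x = (if x \<le> 0 then space M else if x \<le> 1 then A \<union> B
      else if x \<le> 2 then A \<inter> B else {})" for x
    by (auto simp: geq_set_def indicator_def)
  have "choquet M v ?Z = 0 + integral {0..3} \<phi>"
    unfolding \<phi>_def by (rule choquet_eq_interval[OF cap Zm]) (auto simp: indicator_def)
  also have "integral {0..3} \<phi> = integral {0..1} \<phi> + integral {1..2} \<phi> + integral {2..3} \<phi>"
    using integral_combine_real[of 0 1 3 \<phi>] integral_combine_real[of 1 2 3 \<phi>] \<phi>_int by simp
  also have "integral {0..1} \<phi> = integral {0..1} (\<lambda>_::real. v (A \<union> B))"
    by (rule integral_spike[of "{0}"]) (auto simp: \<phi>_def level_sets)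
  also have "integral {1..2} \<phi> = integral {1..2} (\<lambda>_::real. v (A \<inter> B))"
    by (rule integral_spike[of "{1}"]) (auto simp: \<phi>_def level_sets)
  also have "integral {2..3} \<phi> = integral {2..3} (\<lambda>_::real. 0)"
    by (rule integral_spike[of "{2}"]) (use cap in \<open>auto simp: \<phi>_def level_sets capacity_def\<close>)
  finally show ?thesis
    by simp
qed

lemma choquet_indicator:
  assumes "capacity M v" "A \<in> sets M"
  shows "choquet M v (indicator A) = v A"
  using choquet_indicator_add[OF assms sets.empty_sets] assms(1) by (simp add: capacity_def)

lemma coherent_cong:
  assumes "\<And>X. X \<in> bdd_meas M \<Longrightarrow> R X = R' X"
  shows "coherent M R \<longleftrightarrow> coherent M R'"
proof -
  have "(\<lambda>\<omega>. X \<omega> + c) \<in> bdd_meas M" "(\<lambda>\<omega>. c * X \<omega>) \<in> bdd_meas M"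
    "(\<lambda>\<omega>. l * X \<omega> + (1 - l) * Y \<omega>) \<in> bdd_meas M"
    if "X \<in> bdd_meas M" "Y \<in> bdd_meas M" for X Y c l
    using that by (auto intro!: bdd_meas_add bdd_meas_cmult bdd_meas_const)
  then show ?thesis
    unfolding coherent_def by (simp add: assms cong: ball_cong)
qed

lemma coherent_subadditive:
  assumes coh: "coherent M R" and X: "X \<in> bdd_meas M" and Y: "Y \<in> bdd_meas M"
  shows "R (\<lambda>\<omega>. X \<omega> + Y \<omega>) \<le> R X + R Y"
proof -
  from coh have hom: "\<And>Z c. Z \<in> bdd_meas M \<Longrightarrow> 0 < c \<Longrightarrow> R (\<lambda>\<omega>. c * Z \<omega>) = c * R Z"
    and conv: "\<And>l. 0 \<le> l \<Longrightarrow> l \<le> 1 \<Longrightarrow>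
      R (\<lambda>\<omega>. l * X \<omega> + (1 - l) * Y \<omega>) \<le> l * R X + (1 - l) * R Y"
    using X Y by (simp_all add: coherent_def)
  let ?Z = "\<lambda>\<omega>. 1/2 * X \<omega> + (1 - 1/2) * Y \<omega>"
  have "?Z \<in> bdd_meas M"
    using X Y by (intro bdd_meas_add bdd_meas_cmult)
  from hom[OF this, of 2] have "R (\<lambda>\<omega>. X \<omega> + Y \<omega>) = 2 * R ?Z"
    by (simp add: algebra_simps)
  with conv[of "1/2"] show ?thesis
    by simp
qed

lemma coherent_choquet:
  assumes cap: "capacity M v" and sub: "submodular M v"
  shows "coherent M (choquet M v)"
  unfolding coherent_def
proof (intro conjI ballI allI impI)
  fix X Y
  assume "X \<in> bdd_meas M" "Y \<in> bdd_meas M"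
  then show "\<forall>\<omega>\<in>space M. X \<omega> \<le> Y \<omega> \<Longrightarrow> choquet M v X \<le> choquet M v Y"
    using choquet_mono[OF cap] by blast
  fix l :: real
  assume "0 \<le> l \<and> l \<le> 1"
  then consider "l = 0" | "l = 1" | "0 < l" "0 < 1 - l"
    by fastforce
  then show "choquet M v (\<lambda>\<omega>. l * X \<omega> + (1 - l) * Y \<omega>) \<le> l * choquet M v X + (1 - l) * choquet M v Y"
  proof cases
    case 3
    have "choquet M v (\<lambda>\<omega>. l * X \<omega> + (1 - l) * Y \<omega>)
        \<le> choquet M v (\<lambda>\<omega>. l * X \<omega>) + choquet M v (\<lambda>\<omega>. (1 - l) * Y \<omega>)"
      using \<open>X \<in> _\<close> \<open>Y \<in> _\<close> by (intro choquet_subadditive[OF cap sub] bdd_meas_cmult)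
    then show ?thesis
      using choquet_cmult[OF cap \<open>X \<in> _\<close> 3(1)] choquet_cmult[OF cap \<open>Y \<in> _\<close> 3(2)] by simp
  qed simp_all
qed (simp_all add: choquet_add_const[OF cap] choquet_cmult[OF cap])

lemma submodular_of_coherent_choquet:
  assumes cap: "capacity M v" and coh: "coherent M (choquet M v)"
  shows "submodular M v"
  unfolding submodular_def
proof (intro ballI)
  fix A B
  assume A: "A \<in> sets M" and B: "B \<in> sets M"
  have "v (A \<union> B) + v (A \<inter> B) = choquet M v (\<lambda>\<omega>. indicator A \<omega> + indicator B \<omega>)"
    using choquet_indicator_add[OF cap A B] by simp
  also have "\<dots> \<le> choquet M v (indicator A) + choquet M v (indicator B)"
    using coherent_subadditive[OF coh bdd_meas_indicator[OF A] bdd_meas_indicator[OF B]] .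
  also have "\<dots> = v A + v B"
    using choquet_indicator[OF cap] A B by simp
  finally show "v (A \<union> B) + v (A \<inter> B) \<le> v A + v B" .
qed

theorem proposition9:
  fixes M :: "'a measure" and w :: "'a set \<Rightarrow> real" and \<alpha> :: real
  assumes "capacity M w" and "0 < \<alpha>" and "\<alpha> \<le> 1"
  shows "(\<forall>X\<in>bdd_meas M. ES M w \<alpha> X = choquet M (w_alpha w \<alpha>) X) \<and>
         (coherent M (ES M w \<alpha>) \<longleftrightarrow> submodular M (w_alpha w \<alpha>))"
proof -
  have ES_eq: "\<And>X. X \<in> bdd_meas M \<Longrightarrow> ES M w \<alpha> X = choquet M (w_alpha w \<alpha>) X"
    using ES_eq_choquet_w_alpha[OF assms] .
  have cap: "capacity M (w_alpha w \<alpha>)"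
    using assms by (rule capacity_w_alpha)
  have "coherent M (ES M w \<alpha>) \<longleftrightarrow> coherent M (choquet M (w_alpha w \<alpha>))"
    using ES_eq by (rule coherent_cong)
  also have "\<dots> \<longleftrightarrow> submodular M (w_alpha w \<alpha>)"
    using coherent_choquet[OF cap] submodular_of_coherent_choquet[OF cap] by blast
  finally show ?thesis
    using ES_eq by blast
qed

end
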